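(* Let $G$ be a group and let $L,N$ be normal subgroups of $G$ with $L\geqslant N$, and $i\colon N\hookrightarrow L$ the inclusion. Assume $\mathcal{W}(G,L,N)$ is finite dimensional with $\ell=\dim_{\mathbb{R}}\mathcal{W}(G,L,N)$. Take any basis of $\mathcal{W}(G,L,N)$ and any representatives $\nu_1,\dots,\nu_\ell\in\mathrm{Q}(N)^G$ of it. Then there exist $\mathscr{C}_1,\mathscr{C}_2>0$ (depending on $\nu_1,\dots,\nu_\ell$) such that for every $\nu\in\mathrm{Q}(N)^G$ there exist $k\in\mathrm{H}^1(N)^G$ and $\psi\in\mathrm{Q}(L)^G$ with $\nu=k+i^*\psi+\sum_{j=1}^\ell a_j\nu_j$ and $$\mathscr{D}(\nu)\ge\mathscr{C}_1^{-1}\Big(\mathscr{D}(\psi)+\mathscr{C}_2^{-1}\sum_{j=1}^\ell|a_j|\Big),$$ where $(a_1,\dots,a_\ell)\in\mathbb{R}^\ell$ is the unique tuple with $[\nu]=\sum_j a_j[\nu_j]$ in $\mathcal{W}(G,L,N)$.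
   Context: For a group $H$, $\psi\colon H\to\mathbb{R}$ is homogeneous if $\psi(h^n)=n\psi(h)$; its defect is $\mathscr{D}(\psi)=\sup_{h_1,h_2\in H}|\psi(h_1h_2)-\psi(h_1)-\psi(h_2)|$; quasimorphism means finite defect. $\mathrm{Q}(N)^G$ (resp. $\mathrm{Q}(L)^G$): homogeneous quasimorphisms on $N$ (resp. $L$) invariant under conjugation by $G$; $\mathrm{H}^1(N)^G$: $G$-invariant homomorphisms $N\to\mathbb{R}$; $i^*\psi=\psi|_N$; $\mathcal{W}(G,L,N)=\mathrm{Q}(N)^G/(\mathrm{H}^1(N)^G+i^*\mathrm{Q}(L)^G)$ and $[\nu]$ denotes the class of $\nu$. If $\ell=0$ the sums are empty. *)

theory Defs
  imports "HOL-Algebra.Algebra"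
begin

text \<open>Functions H \<rightarrow> R on a subgroup H of G are modelled as total functions
  'a \<Rightarrow> real; only their values on H matter.\<close>

definition homogeneous :: "('a, 'b) monoid_scheme \<Rightarrow> 'a set \<Rightarrow> ('a \<Rightarrow> real) \<Rightarrow> bool" where
  "homogeneous G H \<psi> \<longleftrightarrow> (\<forall>h\<in>H. \<forall>n::int. \<psi> (h [^]\<^bsub>G\<^esub> n) = of_int n * \<psi> h)"

definition defect :: "('a, 'b) monoid_scheme \<Rightarrow> 'a set \<Rightarrow> ('a \<Rightarrow> real) \<Rightarrow> real" where
  "defect G H \<psi> = (SUP p\<in>H \<times> H. \<bar>\<psi> (fst p \<otimes>\<^bsub>G\<^esub> snd p) - \<psi> (fst p) - \<psi> (snd p)\<bar>)"

definition quasimorphism :: "('a, 'b) monoid_scheme \<Rightarrow> 'a set \<Rightarrow> ('a \<Rightarrow> real) \<Rightarrow> bool" where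
  "quasimorphism G H \<psi> \<longleftrightarrow>
     (\<exists>C. \<forall>x\<in>H. \<forall>y\<in>H. \<bar>\<psi> (x \<otimes>\<^bsub>G\<^esub> y) - \<psi> x - \<psi> y\<bar> \<le> C)"

definition G_invariant :: "('a, 'b) monoid_scheme \<Rightarrow> 'a set \<Rightarrow> ('a \<Rightarrow> real) \<Rightarrow> bool" where
  "G_invariant G H \<psi> \<longleftrightarrow>
     (\<forall>g\<in>carrier G. \<forall>h\<in>H. \<psi> (g \<otimes>\<^bsub>G\<^esub> h \<otimes>\<^bsub>G\<^esub> inv\<^bsub>G\<^esub> g) = \<psi> h)"

definition QG :: "('a, 'b) monoid_scheme \<Rightarrow> 'a set \<Rightarrow> ('a \<Rightarrow> real) set" where
  "QG G H = {\<psi>. homogeneous G H \<psi> \<and> quasimorphism G H \<psi> \<and> G_invariant G H \<psi>}"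

definition H1G :: "('a, 'b) monoid_scheme \<Rightarrow> 'a set \<Rightarrow> ('a \<Rightarrow> real) set" where
  "H1G G H = {k. (\<forall>x\<in>H. \<forall>y\<in>H. k (x \<otimes>\<^bsub>G\<^esub> y) = k x + k y) \<and> G_invariant G H k}"

definition in_W_kernel :: "('a, 'b) monoid_scheme \<Rightarrow> 'a set \<Rightarrow> 'a set \<Rightarrow> ('a \<Rightarrow> real) \<Rightarrow> bool" where
  "in_W_kernel G L N f \<longleftrightarrow>
     (\<exists>k \<psi>. k \<in> H1G G N \<and> \<psi> \<in> QG G L \<and> (\<forall>x\<in>N. f x = k x + \<psi> x))"

text \<open>The classes [\<nu>_0], ..., [\<nu>_{l-1}] of \<nu>_j \<in> Q(N)^G form a basis of
  W(G,L,N) = Q(N)^G / (H^1(N)^G + i^* Q(L)^G): linear independence and spanning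
  in the quotient, written out on representatives.\<close>
definition W_basis :: "('a, 'b) monoid_scheme \<Rightarrow> 'a set \<Rightarrow> 'a set \<Rightarrow> nat \<Rightarrow> (nat \<Rightarrow> 'a \<Rightarrow> real) \<Rightarrow> bool" where
  "W_basis G L N l \<nu>s \<longleftrightarrow>
     (\<forall>j<l. \<nu>s j \<in> QG G N) \<and>
     (\<forall>a::nat \<Rightarrow> real. in_W_kernel G L N (\<lambda>x. \<Sum>j<l. a j * \<nu>s j x) \<longrightarrow> (\<forall>j<l. a j = 0)) \<and>
     (\<forall>\<nu>\<in>QG G N. \<exists>a::nat \<Rightarrow> real. in_W_kernel G L N (\<lambda>x. \<nu> x - (\<Sum>j<l. a j * \<nu>s j x)))"

end

theory Submission
  imports Defs "HOL-Library.Function_Algebras" "HOL-Analysis.Product_Vector"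
begin

(*
  Give Q(L)^G x R^l the seminorm D(psi) + sum_j |a_j| and Q(N)^G the defect D; both spaces
  are complete, and D vanishes exactly on homomorphisms. The map T (psi, a) = psi|N + sum_j a_j nu_j
  is linear and bounded, and since the classes [nu_j] span W(G,L,N), every nu in Q(N)^G equals
  some T x up to an element of H^1(N)^G, i.e. up to a vector of defect zero. The open mapping
  theorem for complete seminormed spaces (Baire category plus successive approximation) then
  gives M with D(psi) + sum_j |a_j| <= M D(nu), so C1 = M and C2 = 1 work.

  Completeness of (Q(H)^G, D) is the delicate point: a D-Cauchy sequence f_n need not converge
  pointwise. Its limit is phi a = Lambda (u |-> u a), where Lambda is a linear functional, built
  from a Hamel basis, that extends the limits of f_n along the defect terms and along the
  relations expressing homogeneity and G-invariance.
*)

instantiation "fun" :: (type, real_vector) real_vector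
begin

definition scaleR_fun :: "real \<Rightarrow> ('a \<Rightarrow> 'b) \<Rightarrow> 'a \<Rightarrow> 'b"
  where "scaleR_fun c f = (\<lambda>x. c *\<^sub>R f x)"

instance by standard (auto simp: scaleR_fun_def fun_eq_iff scaleR_add_right scaleR_add_left)

end

lemma scaleR_fun_apply [simp]: "(c *\<^sub>R f) x = c *\<^sub>R f x"
  by (simp add: scaleR_fun_def)

lemma sum_fun_apply: "(\<Sum>i\<in>I. f i) x = (\<Sum>i\<in>I. f i x)"
  by (induction I rule: infinite_finite_induct) auto

definition seminorm_on :: "'x::real_vector set \<Rightarrow> ('x \<Rightarrow> real) \<Rightarrow> bool" where
  "seminorm_on S p \<longleftrightarrow> subspace S \<and> (\<forall>x\<in>S. 0 \<le> p x) \<and>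
     (\<forall>x\<in>S. \<forall>y\<in>S. p (x + y) \<le> p x + p y) \<and> (\<forall>c. \<forall>x\<in>S. p (c *\<^sub>R x) = \<bar>c\<bar> * p x)"

definition seminorm_complete :: "'x::real_vector set \<Rightarrow> ('x \<Rightarrow> real) \<Rightarrow> bool" where
  "seminorm_complete S p \<longleftrightarrow> (\<forall>f. (\<forall>n. f n \<in> S) \<longrightarrow>
     (\<forall>e>0. \<exists>N. \<forall>m\<ge>N. \<forall>n\<ge>N. p (f m - f n) < e) \<longrightarrow> (\<exists>x\<in>S. (\<lambda>n. p (f n - x)) \<longlonglongrightarrow> 0))"

context
  fixes S :: "'x::real_vector set" and p :: "'x \<Rightarrow> real"
  assumes p: "seminorm_on S p"
begin

lemma seminorm_on_subspace: "subspace S"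
  using p by (simp add: seminorm_on_def)

lemma seminorm_on_nonneg: "x \<in> S \<Longrightarrow> 0 \<le> p x"
  using p by (simp add: seminorm_on_def)

lemma seminorm_on_triangle: "x \<in> S \<Longrightarrow> y \<in> S \<Longrightarrow> p (x + y) \<le> p x + p y"
  using p by (simp add: seminorm_on_def)

lemma seminorm_on_scaleR: "x \<in> S \<Longrightarrow> p (c *\<^sub>R x) = \<bar>c\<bar> * p x"
  using p by (simp add: seminorm_on_def)

lemma seminorm_on_zero: "p 0 = 0"
  using seminorm_on_scaleR[of 0 0] subspace_0[OF seminorm_on_subspace] by simp

lemma seminorm_on_minus: "x \<in> S \<Longrightarrow> p (- x) = p x"
  using seminorm_on_scaleR[of x "-1"] by simp

lemma seminorm_on_minus_commute: "x \<in> S \<Longrightarrow> y \<in> S \<Longrightarrow> p (x - y) = p (y - x)"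
  using seminorm_on_minus[of "y - x"] subspace_diff[OF seminorm_on_subspace] by simp

lemma seminorm_on_triangle_diff:
  "x \<in> S \<Longrightarrow> y \<in> S \<Longrightarrow> z \<in> S \<Longrightarrow> p (x - z) \<le> p (x - y) + p (y - z)"
  using seminorm_on_triangle[of "x - y" "y - z"] subspace_diff[OF seminorm_on_subspace] by simp

lemma seminorm_on_diff_le: "x \<in> S \<Longrightarrow> y \<in> S \<Longrightarrow> p (x - y) \<le> p x + p y"
  using seminorm_on_triangle[of x "- y"] seminorm_on_minus[of y]
    subspace_neg[OF seminorm_on_subspace] by simp

lemma seminorm_on_sum:
  "finite I \<Longrightarrow> (\<And>i. i \<in> I \<Longrightarrow> f i \<in> S) \<Longrightarrow> p (sum f I) \<le> (\<Sum>i\<in>I. p (f i))"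
proof (induction I rule: finite_induct)
  case empty
  then show ?case by (simp add: seminorm_on_zero)
next
  case (insert i I)
  have "p (f i + sum f I) \<le> p (f i) + p (sum f I)"
    using insert.prems by (intro seminorm_on_triangle subspace_sum[OF seminorm_on_subspace]) auto
  then show ?case using insert by simp
qed

end

lemma seminorm_on_nested_balls_dist:
  assumes q: "seminorm_on S q" and ys: "\<And>k. ys k \<in> S"
    and shrink: "\<And>k. q (ys (Suc k) - ys k) + rs (Suc k) \<le> rs k" and "k \<le> m"
  shows "q (ys m - ys k) + rs m \<le> rs k"
  using \<open>k \<le> m\<close>
proof (induction m rule: dec_induct)
  case base
  then show ?case by (simp add: seminorm_on_zero[OF q])
next
  case (step m)
  have "q (ys (Suc m) - ys k) \<le> q (ys (Suc m) - ys m) + q (ys m - ys k)"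
    by (rule seminorm_on_triangle_diff[OF q ys ys ys])
  then show ?case using step.IH shrink[of m] by linarith
qed

lemma seminorm_complete_nested_balls:
  assumes q: "seminorm_on S q" and complete: "seminorm_complete S q"
    and ys: "\<And>k. ys k \<in> S"
    and step: "\<And>k. q (ys (Suc k) - ys k) + rs (Suc k) \<le> rs k"
    and rs: "rs \<longlonglongrightarrow> 0"
  shows "\<exists>y\<in>S. \<forall>k. q (y - ys k) \<le> rs k"
proof -
  have "decseq rs"
    using step seminorm_on_nonneg[OF q] subspace_diff[OF seminorm_on_subspace[OF q] ys ys]
    by (intro decseq_SucI) (smt (verit))
  then have "0 \<le> rs k" for k using rs by (rule decseq_ge)
  moreover have "q (ys m - ys k) + rs m \<le> rs k" if "k \<le> m" for k m
    using q ys step that by (rule seminorm_on_nested_balls_dist)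
  ultimately have nested: "q (ys m - ys k) \<le> rs k" if "k \<le> m" for k m
    using that by (smt (verit))
  have "\<exists>N. \<forall>m\<ge>N. \<forall>n\<ge>N. q (ys m - ys n) < e" if "e > 0" for e
  proof -
    have "\<exists>N. \<forall>n\<ge>N. rs n < e / 2"
      using order_tendstoD(2)[OF rs, of "e / 2"] \<open>e > 0\<close> by (simp add: eventually_sequentially)
    then obtain N where N: "rs N < e / 2" by blast
    have "q (ys m - ys n) < e" if "m \<ge> N" "n \<ge> N" for m n
    proof -
      have "q (ys m - ys n) \<le> q (ys m - ys N) + q (ys n - ys N)"
        using seminorm_on_triangle_diff[OF q ys[of m] ys[of N] ys[of n]]
          seminorm_on_minus_commute[OF q ys[of N] ys[of n]] by linarith
      then show ?thesis using nested[OF \<open>m \<ge> N\<close>] nested[OF \<open>n \<ge> N\<close>] N by linarith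
    qed
    then show ?thesis by blast
  qed
  then obtain y where y: "y \<in> S" and lim: "(\<lambda>n. q (ys n - y)) \<longlonglongrightarrow> 0"
    using complete ys unfolding seminorm_complete_def by blast
  have "q (y - ys k) \<le> rs k" for k
  proof (rule Lim_bounded2)
    show "(\<lambda>m. q (ys m - y) + rs k) \<longlonglongrightarrow> rs k"
      using tendsto_add[OF lim tendsto_const[of "rs k"]] by simp
    show "\<forall>m\<ge>k. q (ys m - y) + rs k \<ge> q (y - ys k)"
      using seminorm_on_triangle_diff[OF q y ys ys] seminorm_on_minus_commute[OF q y ys]
        nested by (smt (verit))
  qed
  then show ?thesis using y by blast
qed

lemma seminorm_complete_not_covered:
  fixes A :: "nat \<Rightarrow> 'x::real_vector set"
  assumes q: "seminorm_on S q" and complete: "seminorm_complete S q"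
    and ZE: "\<And>n y0 r. y0 \<in> S \<Longrightarrow> r > 0 \<Longrightarrow> Z n y0 r \<in> S \<and> q (Z n y0 r - y0) < r \<and>
      E n y0 r > 0 \<and> (\<forall>a\<in>A n. E n y0 r \<le> q (Z n y0 r - a))"
  shows "\<exists>y\<in>S. \<forall>n. y \<notin> A n"
proof -
  \<comment> \<open>Each ball lies inside the previous one, misses \<open>A n\<close>, and has at most half its radius.\<close>
  define c where
    "c = rec_nat (0, 1) (\<lambda>n (y, r). (Z n y r, min (E n y r / 2) ((r - q (Z n y r - y)) / 2)))"
  define ys where "ys n = fst (c n)" for n
  define rs where "rs n = snd (c n)" for n
  have ys_Suc: "ys (Suc n) = Z n (ys n) (rs n)"
    and rs_Suc: "rs (Suc n) = min (E n (ys n) (rs n) / 2) ((rs n - q (ys (Suc n) - ys n)) / 2)" for n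
    by (simp_all add: ys_def rs_def c_def split: prod.split)
  have inv: "ys n \<in> S \<and> 0 < rs n \<and> rs n \<le> (1 / 2) ^ n" for n
  proof (induction n)
    case 0
    then show ?case by (simp add: ys_def rs_def c_def subspace_0[OF seminorm_on_subspace[OF q]])
  next
    case (Suc n)
    then have "0 \<le> q (Z n (ys n) (rs n) - ys n)"
      using ZE seminorm_on_nonneg[OF q] subspace_diff[OF seminorm_on_subspace[OF q]] by blast
    then show ?case using Suc ZE[of "ys n" "rs n" n] by (auto simp: ys_Suc rs_Suc min_def)
  qed
  have Z_close: "q (ys (Suc n) - ys n) < rs n" and E_pos: "E n (ys n) (rs n) > 0"
    and E_sep: "\<forall>a\<in>A n. E n (ys n) (rs n) \<le> q (ys (Suc n) - a)" for n
    using ZE[of "ys n" "rs n" n] inv by (simp_all add: ys_Suc)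
  have rs_Suc_le: "rs (Suc n) \<le> E n (ys n) (rs n) / 2"
    "rs (Suc n) \<le> (rs n - q (ys (Suc n) - ys n)) / 2" for n
    unfolding rs_Suc by (rule min.cobounded1, rule min.cobounded2)
  have step: "q (ys (Suc n) - ys n) + rs (Suc n) \<le> rs n" for n
    using Z_close[of n] rs_Suc_le(2)[of n] by argo
  have rs_lim: "rs \<longlonglongrightarrow> 0"
    using inv by (intro real_tendsto_sandwich[OF _ _ tendsto_const LIMSEQ_realpow_zero[of "1/2"]])
      (auto intro!: always_eventually less_imp_le)
  then obtain y where y: "y \<in> S" and close: "\<And>n. q (y - ys n) \<le> rs n"
    using seminorm_complete_nested_balls[of S q ys rs, OF q complete _ step rs_lim] inv by blast
  have "y \<notin> A n" for n
  proof
    assume "y \<in> A n"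
    then have "E n (ys n) (rs n) \<le> q (y - ys (Suc n))"
      using E_sep[of n] seminorm_on_minus_commute[OF q] y inv by metis
    then show False using close[of "Suc n"] rs_Suc_le(1)[of n] E_pos[of n] by linarith
  qed
  then show ?thesis using y by blast
qed

lemma seminorm_Baire:
  fixes A :: "nat \<Rightarrow> 'x::real_vector set"
  assumes q: "seminorm_on S q" and complete: "seminorm_complete S q"
    and cover: "S \<subseteq> (\<Union>n. A n)"
  shows "\<exists>n y0 r. y0 \<in> S \<and> r > 0 \<and>
    (\<forall>z\<in>S. q (z - y0) < r \<longrightarrow> (\<forall>\<epsilon>>0. \<exists>a\<in>A n. q (z - a) < \<epsilon>))"
proof (rule ccontr)
  assume "\<not> ?thesis"
  then have "\<forall>n y0 r. y0 \<in> S \<longrightarrow> r > 0 \<longrightarrow>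
      (\<exists>z\<in>S. q (z - y0) < r \<and> (\<exists>\<epsilon>>0. \<forall>a\<in>A n. \<not> q (z - a) < \<epsilon>))"
    by simp
  then obtain Z E where "\<And>n y0 r. y0 \<in> S \<Longrightarrow> r > 0 \<Longrightarrow> Z n y0 r \<in> S \<and>
      q (Z n y0 r - y0) < r \<and> E n y0 r > 0 \<and> (\<forall>a\<in>A n. E n y0 r \<le> q (Z n y0 r - a))"
    by (metis not_less)
  from seminorm_complete_not_covered[where Z = Z and E = E, OF q complete this]
  obtain y where "y \<in> S" "\<forall>n. y \<notin> A n"
    by blast
  then show False using cover by blast
qed

lemma bounded_image_dense_in_ball:
  fixes T :: "'x::real_vector \<Rightarrow> 'y::real_vector"
  assumes q: "seminorm_on V q" and complete: "seminorm_complete V q"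
    and T: "T ` U \<subseteq> V" and onto: "\<forall>y\<in>V. \<exists>x\<in>U. q (y - T x) = 0"
  shows "\<exists>n y0 r. y0 \<in> V \<and> r > 0 \<and>
    (\<forall>z\<in>V. q (z - y0) < r \<longrightarrow> (\<forall>\<epsilon>>0. \<exists>x\<in>U. p x \<le> real n \<and> q (z - T x) < \<epsilon>))"
proof -
  define A where "A n = {y\<in>V. \<exists>x\<in>U. p x \<le> real n \<and> q (y - T x) = 0}" for n
  have "V \<subseteq> (\<Union>n. A n)"
  proof
    fix y assume "y \<in> V"
    then obtain x where "x \<in> U" "q (y - T x) = 0" using onto by blast
    then show "y \<in> (\<Union>n. A n)"
      using \<open>y \<in> V\<close> real_nat_ceiling_ge[of "p x"] unfolding A_def by blast
  qed
  then obtain n y0 r where y0: "y0 \<in> V" and r: "r > 0"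
    and dense: "\<forall>z\<in>V. q (z - y0) < r \<longrightarrow> (\<forall>\<epsilon>>0. \<exists>a\<in>A n. q (z - a) < \<epsilon>)"
    using seminorm_Baire[OF q complete] by blast
  have "\<exists>x\<in>U. p x \<le> real n \<and> q (z - T x) < \<epsilon>"
    if z: "z \<in> V" "q (z - y0) < r" and \<epsilon>: "\<epsilon> > 0" for z \<epsilon>
  proof -
    obtain a x where a: "a \<in> V" and x: "x \<in> U" "p x \<le> real n" "q (a - T x) = 0"
      and "q (z - a) < \<epsilon>"
      using dense z \<epsilon> unfolding A_def by blast
    moreover have "q (z - T x) \<le> q (z - a) + q (a - T x)"
      using seminorm_on_triangle_diff[OF q z(1) a] x(1) T by blast
    ultimately show ?thesis by force
  qed
  then show ?thesis using y0 r by blast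
qed

lemma bounded_image_dense_near_0:
  fixes T :: "'x::real_vector \<Rightarrow> 'y::real_vector"
  assumes p: "seminorm_on U p" and q: "seminorm_on V q" and complete: "seminorm_complete V q"
    and T: "linear T" "T ` U \<subseteq> V" and onto: "\<forall>y\<in>V. \<exists>x\<in>U. q (y - T x) = 0"
  shows "\<exists>R>0. \<exists>r>0. \<forall>z\<in>V. q z < r \<longrightarrow> (\<forall>\<epsilon>>0. \<exists>x\<in>U. p x \<le> R \<and> q (z - T x) < \<epsilon>)"
proof -
  have U: "subspace U" and V: "subspace V"
    using p q by (simp_all add: seminorm_on_subspace)
  obtain n y0 r where y0: "y0 \<in> V" and r: "r > 0" and near_y0:
    "\<forall>z\<in>V. q (z - y0) < r \<longrightarrow> (\<forall>\<epsilon>>0. \<exists>x\<in>U. p x \<le> real n \<and> q (z - T x) < \<epsilon>)"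
    using bounded_image_dense_in_ball[OF q complete T(2) onto] by blast
  have "\<exists>x\<in>U. p x \<le> 2 * real n + 1 \<and> q (z - T x) < \<epsilon>"
    if z: "z \<in> V" "q z < r" and \<epsilon>: "\<epsilon> > 0" for z \<epsilon>
  proof -
    have "z + y0 \<in> V" "q (z + y0 - y0) < r" "q (y0 - y0) < r" "\<epsilon> / 2 > 0"
      using z y0 r \<epsilon> subspace_add[OF V] seminorm_on_zero[OF q] by simp_all
    then obtain x1 x2 where x1: "x1 \<in> U" "p x1 \<le> real n" "q (z + y0 - T x1) < \<epsilon> / 2"
      and x2: "x2 \<in> U" "p x2 \<le> real n" "q (y0 - T x2) < \<epsilon> / 2"
      using near_y0[rule_format] y0 by meson
    have eq: "z - T (x1 - x2) = (z + y0 - T x1) - (y0 - T x2)"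
      using linear_diff[OF T(1)] by (simp add: algebra_simps)
    have "z + y0 - T x1 \<in> V" "y0 - T x2 \<in> V"
      using z y0 x1 x2 T(2) V by (auto intro!: subspace_diff subspace_add)
    then have "q (z - T (x1 - x2)) \<le> q (z + y0 - T x1) + q (y0 - T x2)"
      unfolding eq by (rule seminorm_on_diff_le[OF q])
    moreover have "p (x1 - x2) \<le> p x1 + p x2"
      using seminorm_on_diff_le[OF p x1(1) x2(1)] .
    ultimately have "p (x1 - x2) \<le> 2 * real n + 1 \<and> q (z - T (x1 - x2)) < \<epsilon>"
      using x1 x2 by linarith
    then show ?thesis
      using subspace_diff[OF U x1(1) x2(1)] by blast
  qed
  then show ?thesis using r by (intro exI[of _ "2 * real n + 1"]) auto
qed

lemma open_mapping_halving:
  fixes T :: "'x::real_vector \<Rightarrow> 'y::real_vector"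
  assumes p: "seminorm_on U p" and q: "seminorm_on V q" and complete: "seminorm_complete V q"
    and T: "linear T" "T ` U \<subseteq> V" and onto: "\<forall>y\<in>V. \<exists>x\<in>U. q (y - T x) = 0"
  shows "\<exists>M>0. \<forall>y\<in>V. \<exists>x\<in>U. p x \<le> M * q y \<and> q (y - T x) \<le> q y / 2"
proof -
  obtain R r where R: "R > 0" and r: "r > 0" and ball:
    "\<forall>z\<in>V. q z < r \<longrightarrow> (\<forall>\<epsilon>>0. \<exists>x\<in>U. p x \<le> R \<and> q (z - T x) < \<epsilon>)"
    using bounded_image_dense_near_0[OF assms] by blast
  have "\<exists>x\<in>U. p x \<le> 2 * R / r * q y \<and> q (y - T x) \<le> q y / 2" if y: "y \<in> V" for y
  proof (cases "q y = 0")
    case True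
    then show ?thesis
      using subspace_0[OF seminorm_on_subspace[OF p]] seminorm_on_zero[OF p] linear_0[OF T(1)]
      by (intro bexI[of _ 0]) auto
  next
    case False
    then have qy: "q y > 0" using seminorm_on_nonneg[OF q y] by simp
    define c where "c = r / (2 * q y)"
    have c: "c > 0" using r qy by (simp add: c_def)
    have cy: "c *\<^sub>R y \<in> V" "q (c *\<^sub>R y) < r"
      using subspace_scale[OF seminorm_on_subspace[OF q] y] seminorm_on_scaleR[OF q y] qy r
      by (simp_all add: c_def)
    moreover have "c * (q y / 2) > 0"
      using c qy by simp
    ultimately obtain x where x: "x \<in> U" "p x \<le> R" and close: "q (c *\<^sub>R y - T x) < c * (q y / 2)"
      using ball by blast
    have "y - T ((1 / c) *\<^sub>R x) = (1 / c) *\<^sub>R (c *\<^sub>R y - T x)"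
      using linear_scale[OF T(1)] c by (simp add: scaleR_diff_right)
    then have "q (y - T ((1 / c) *\<^sub>R x)) = (1 / c) * q (c *\<^sub>R y - T x)"
      using seminorm_on_scaleR[OF q] subspace_diff[OF seminorm_on_subspace[OF q] cy(1)] x(1) T(2) c
      by auto
    also have "\<dots> < q y / 2"
      using close c by (simp add: field_simps)
    finally have "q (y - T ((1 / c) *\<^sub>R x)) \<le> q y / 2" by simp
    moreover have "p ((1 / c) *\<^sub>R x) \<le> 2 * R / r * q y"
      using seminorm_on_scaleR[OF p x(1)] x(2) c qy r by (simp add: c_def field_simps)
    ultimately show ?thesis
      using subspace_scale[OF seminorm_on_subspace[OF p] x(1)] by blast
  qed
  then show ?thesis using R r by (intro exI[of _ "2 * R / r"]) auto
qed

lemma halving_iteration: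
  fixes T :: "'x::real_vector \<Rightarrow> 'y::real_vector" and p :: "'x \<Rightarrow> real" and q :: "'y \<Rightarrow> real"
  assumes U: "subspace U" and V: "subspace V" and T: "linear T" "T ` U \<subseteq> V" and M: "0 \<le> M"
    and F: "\<And>y. y \<in> V \<Longrightarrow> F y \<in> U \<and> p (F y) \<le> M * q y \<and> q (y - T (F y)) \<le> q y / 2"
    and y: "y \<in> V"
  shows "\<exists>s. s 0 = 0 \<and> (\<forall>n. s n \<in> U \<and> q (y - T (s n)) \<le> q y * (1 / 2) ^ n \<and>
    p (s (Suc n) - s n) \<le> M * q y * (1 / 2) ^ n)"
proof -
  define s where "s = rec_nat 0 (\<lambda>_ s. s + F (y - T s))"
  have s_Suc: "s (Suc n) = s n + F (y - T (s n))" for n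
    by (simp add: s_def)
  have s: "s n \<in> U \<and> q (y - T (s n)) \<le> q y * (1 / 2) ^ n" for n
  proof (induction n)
    case 0
    then show ?case by (simp add: s_def linear_0[OF T(1)] subspace_0[OF U])
  next
    case (Suc n)
    have r: "y - T (s n) \<in> V" using Suc y T(2) subspace_diff[OF V] by blast
    have eq: "y - T (s (Suc n)) = (y - T (s n)) - T (F (y - T (s n)))"
      by (simp add: s_Suc linear_add[OF T(1)])
    have "s (Suc n) \<in> U"
      using Suc F[OF r] subspace_add[OF U] by (simp add: s_Suc)
    moreover have "q (y - T (s (Suc n))) \<le> q y * (1 / 2) ^ Suc n"
      unfolding eq using F[OF r] Suc by simp
    ultimately show ?case ..
  qed
  moreover have "p (s (Suc n) - s n) \<le> M * q y * (1 / 2) ^ n" for n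
  proof -
    have "y - T (s n) \<in> V" using s y T(2) subspace_diff[OF V] by blast
    then have "p (s (Suc n) - s n) \<le> M * q (y - T (s n))"
      using F by (simp add: s_Suc)
    also have "\<dots> \<le> M * (q y * (1 / 2) ^ n)"
      using s[of n] M by (intro mult_left_mono) auto
    finally show ?thesis by simp
  qed
  ultimately show ?thesis by (intro exI[of _ s]) (simp add: s_def)
qed

lemma seminorm_bounded_linear_approx:
  fixes T :: "'x::real_vector \<Rightarrow> 'y::real_vector"
  assumes p: "seminorm_on U p" and q: "seminorm_on V q"
    and T: "linear T" "T ` U \<subseteq> V" and bounded: "\<forall>x\<in>U. q (T x) \<le> K * p x"
    and x: "x \<in> U" and s: "\<And>n. s n \<in> U" and y: "y \<in> V"
    and a: "\<And>n. p (x - s n) \<le> a n" "a \<longlonglongrightarrow> 0"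
    and b: "\<And>n. q (y - T (s n)) \<le> b n" "b \<longlonglongrightarrow> 0"
  shows "q (y - T x) = 0"
proof -
  have "q (y - T x) \<le> b n + \<bar>K\<bar> * a n" for n
  proof -
    have sx: "s n - x \<in> U" using s x subspace_diff[OF seminorm_on_subspace[OF p]] by blast
    have "q (y - T x) \<le> q (y - T (s n)) + q (T (s n) - T x)"
      using seminorm_on_triangle_diff[OF q y] s x T(2) by blast
    moreover have "q (T (s n) - T x) \<le> K * p (s n - x)"
      using bounded sx linear_diff[OF T(1)] by metis
    moreover have "K * p (s n - x) \<le> \<bar>K\<bar> * p (s n - x)"
      using seminorm_on_nonneg[OF p sx] by (intro mult_right_mono) auto
    moreover have "\<bar>K\<bar> * p (s n - x) \<le> \<bar>K\<bar> * a n"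
      using seminorm_on_minus_commute[OF p x s] a(1)[of n] by (intro mult_left_mono) auto
    ultimately show ?thesis using b(1)[of n] by linarith
  qed
  moreover have "(\<lambda>n. b n + \<bar>K\<bar> * a n) \<longlonglongrightarrow> 0"
    using a(2) b(2) by (intro tendsto_add_zero tendsto_mult_right_zero)
  ultimately have "q (y - T x) \<le> 0"
    by (intro Lim_bounded2) auto
  moreover have "0 \<le> q (y - T x)"
    using seminorm_on_nonneg[OF q] subspace_diff[OF seminorm_on_subspace[OF q] y] x T(2) by blast
  ultimately show ?thesis by linarith
qed

theorem open_mapping_seminorm:
  fixes T :: "'x::real_vector \<Rightarrow> 'y::real_vector"
  assumes p: "seminorm_on U p" and complete_p: "seminorm_complete U p"
    and q: "seminorm_on V q" and complete_q: "seminorm_complete V q"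
    and T: "linear T" "T ` U \<subseteq> V" and bounded: "\<forall>x\<in>U. q (T x) \<le> K * p x"
    and onto: "\<forall>y\<in>V. \<exists>x\<in>U. q (y - T x) = 0"
  shows "\<exists>M>0. \<forall>y\<in>V. \<exists>x\<in>U. p x \<le> M * q y \<and> q (y - T x) = 0"
proof -
  obtain M where M: "M > 0" and "\<forall>y\<in>V. \<exists>x. x \<in> U \<and> p x \<le> M * q y \<and> q (y - T x) \<le> q y / 2"
    using open_mapping_halving[OF p q complete_q T onto] by blast
  then obtain F where F: "\<And>y. y \<in> V \<Longrightarrow> F y \<in> U \<and> p (F y) \<le> M * q y \<and> q (y - T (F y)) \<le> q y / 2"
    by (auto dest!: bchoice)
  have "\<exists>x\<in>U. p x \<le> 2 * M * q y \<and> q (y - T x) = 0" if y: "y \<in> V" for y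
  proof -
    obtain s where s0: "s 0 = 0" and s: "\<And>n. s n \<in> U" "\<And>n. q (y - T (s n)) \<le> q y * (1 / 2) ^ n"
      and s_step: "\<And>n. p (s (Suc n) - s n) \<le> M * q y * (1 / 2) ^ n"
      using halving_iteration[where p = p and q = q and F = F, OF seminorm_on_subspace[OF p]
          seminorm_on_subspace[OF q] T less_imp_le[OF M] F y]
      by blast
    define rs where "rs n = 2 * M * q y * (1 / 2) ^ n" for n
    have step: "p (s (Suc n) - s n) + rs (Suc n) \<le> rs n" for n
      using s_step[of n] by (simp add: rs_def)
    have rs_lim: "rs \<longlonglongrightarrow> 0"
      unfolding rs_def by (intro tendsto_mult_right_zero LIMSEQ_realpow_zero) auto
    obtain x where x: "x \<in> U" and close: "\<And>n. p (x - s n) \<le> rs n"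
      using seminorm_complete_nested_balls[of U p s rs, OF p complete_p s(1) step rs_lim] by blast
    have "p x \<le> 2 * M * q y"
      using close[of 0] by (simp add: s0 rs_def)
    moreover have "q (y - T x) = 0"
      using seminorm_bounded_linear_approx[OF p q T bounded x s(1) y close rs_lim s(2)]
      by (simp add: LIMSEQ_realpow_zero tendsto_mult_right_zero)
    ultimately show ?thesis using x by blast
  qed
  then show ?thesis using M by (intro exI[of _ "2 * M"]) auto
qed

lemma seminorm_on_times_l1:
  fixes p :: "'x::real_vector \<Rightarrow> real"
  assumes p: "seminorm_on S p"
  shows "seminorm_on (S \<times> (UNIV :: (nat \<Rightarrow> real) set)) (\<lambda>z. p (fst z) + (\<Sum>j<l. \<bar>snd z j\<bar>))"
  unfolding seminorm_on_def
proof (intro conjI ballI allI)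
  show "subspace (S \<times> (UNIV :: (nat \<Rightarrow> real) set))"
    by (intro subspace_Times seminorm_on_subspace[OF p] subspace_UNIV)
  show "0 \<le> p (fst z) + (\<Sum>j<l. \<bar>snd z j\<bar>)" if "z \<in> S \<times> UNIV" for z
    using that seminorm_on_nonneg[OF p] by (auto intro: add_nonneg_nonneg sum_nonneg)
  show "p (fst (z + w)) + (\<Sum>j<l. \<bar>snd (z + w) j\<bar>)
      \<le> p (fst z) + (\<Sum>j<l. \<bar>snd z j\<bar>) + (p (fst w) + (\<Sum>j<l. \<bar>snd w j\<bar>))"
    if "z \<in> S \<times> UNIV" "w \<in> S \<times> UNIV" for z w
  proof -
    have "(\<Sum>j<l. \<bar>snd z j + snd w j\<bar>) \<le> (\<Sum>j<l. \<bar>snd z j\<bar>) + (\<Sum>j<l. \<bar>snd w j\<bar>)"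
      unfolding sum.distrib[symmetric] by (intro sum_mono abs_triangle_ineq)
    then show ?thesis
      using seminorm_on_triangle[OF p, of "fst z" "fst w"] that by auto
  qed
  show "p (fst (c *\<^sub>R z)) + (\<Sum>j<l. \<bar>snd (c *\<^sub>R z) j\<bar>) = \<bar>c\<bar> * (p (fst z) + (\<Sum>j<l. \<bar>snd z j\<bar>))"
    if "z \<in> S \<times> UNIV" for c z
    using that seminorm_on_scaleR[OF p]
    by (auto simp: abs_mult sum_distrib_left distrib_left)
qed

lemma Cauchy_l1_coordinates:
  fixes a :: "nat \<Rightarrow> nat \<Rightarrow> real"
  assumes "\<forall>e>0. \<exists>N. \<forall>m\<ge>N. \<forall>n\<ge>N. (\<Sum>j<l. \<bar>a m j - a n j\<bar>) < e"
  shows "\<exists>b. \<forall>j<l. (\<lambda>n. a n j) \<longlonglongrightarrow> b j"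
proof -
  have "convergent (\<lambda>n. a n j)" if "j < l" for j
    unfolding Cauchy_convergent_iff[symmetric]
  proof (rule CauchyI)
    fix e :: real assume "e > 0"
    then obtain N where N: "\<forall>m\<ge>N. \<forall>n\<ge>N. (\<Sum>j<l. \<bar>a m j - a n j\<bar>) < e"
      using assms by blast
    have "\<bar>a m j - a n j\<bar> \<le> (\<Sum>j<l. \<bar>a m j - a n j\<bar>)" for m n
      using that by (intro member_le_sum) auto
    then have "\<forall>m\<ge>N. \<forall>n\<ge>N. \<bar>a m j - a n j\<bar> < e"
      using N le_less_trans by blast
    then show "\<exists>N. \<forall>m\<ge>N. \<forall>n\<ge>N. norm (a m j - a n j) < e"
      by auto
  qed
  then show ?thesis
    by (intro exI[of _ "\<lambda>j. lim (\<lambda>n. a n j)"]) (simp add: convergent_LIMSEQ_iff)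
qed

lemma seminorm_complete_times_l1:
  fixes p :: "'x::real_vector \<Rightarrow> real"
  assumes p: "seminorm_on S p" and complete: "seminorm_complete S p"
  shows "seminorm_complete (S \<times> (UNIV :: (nat \<Rightarrow> real) set)) (\<lambda>z. p (fst z) + (\<Sum>j<l. \<bar>snd z j\<bar>))"
  unfolding seminorm_complete_def
proof (intro allI impI)
  fix F :: "nat \<Rightarrow> 'x \<times> (nat \<Rightarrow> real)"
  assume F: "\<forall>n. F n \<in> S \<times> UNIV" and Cauchy:
    "\<forall>e>0. \<exists>N. \<forall>m\<ge>N. \<forall>n\<ge>N. p (fst (F m - F n)) + (\<Sum>j<l. \<bar>snd (F m - F n) j\<bar>) < e"
  have fst_S: "fst (F n) \<in> S" for n
    using F by (simp add: mem_Times_iff)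
  have fst_le: "p (fst (F m) - fst (F n)) \<le> p (fst (F m - F n)) + (\<Sum>j<l. \<bar>snd (F m - F n) j\<bar>)"
    and snd_le: "(\<Sum>j<l. \<bar>snd (F m) j - snd (F n) j\<bar>) \<le> p (fst (F m - F n)) + (\<Sum>j<l. \<bar>snd (F m - F n) j\<bar>)"
    for m n
    using seminorm_on_nonneg[OF p subspace_diff[OF seminorm_on_subspace[OF p] fst_S fst_S]]
    by (simp_all add: sum_nonneg)
  have Cauchy_fst: "\<forall>e>0. \<exists>N. \<forall>m\<ge>N. \<forall>n\<ge>N. p (fst (F m) - fst (F n)) < e"
  proof (intro allI impI)
    fix e :: real assume "e > 0"
    then obtain N where "\<forall>m\<ge>N. \<forall>n\<ge>N. p (fst (F m - F n)) + (\<Sum>j<l. \<bar>snd (F m - F n) j\<bar>) < e"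
      using Cauchy by blast
    then show "\<exists>N. \<forall>m\<ge>N. \<forall>n\<ge>N. p (fst (F m) - fst (F n)) < e"
      using fst_le le_less_trans by blast
  qed
  have Cauchy_snd: "\<forall>e>0. \<exists>N. \<forall>m\<ge>N. \<forall>n\<ge>N. (\<Sum>j<l. \<bar>snd (F m) j - snd (F n) j\<bar>) < e"
  proof (intro allI impI)
    fix e :: real assume "e > 0"
    then obtain N where "\<forall>m\<ge>N. \<forall>n\<ge>N. p (fst (F m - F n)) + (\<Sum>j<l. \<bar>snd (F m - F n) j\<bar>) < e"
      using Cauchy by blast
    then show "\<exists>N. \<forall>m\<ge>N. \<forall>n\<ge>N. (\<Sum>j<l. \<bar>snd (F m) j - snd (F n) j\<bar>) < e"
      using snd_le le_less_trans by blast
  qed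
  have "\<exists>\<psi>\<in>S. (\<lambda>n. p (fst (F n) - \<psi>)) \<longlonglongrightarrow> 0"
    by (rule complete[unfolded seminorm_complete_def, rule_format]) (use fst_S Cauchy_fst in auto)
  then obtain \<psi> where \<psi>: "\<psi> \<in> S" and lim_fst: "(\<lambda>n. p (fst (F n) - \<psi>)) \<longlonglongrightarrow> 0"
    by blast
  obtain a where lim_snd: "\<forall>j<l. (\<lambda>n. snd (F n) j) \<longlonglongrightarrow> a j"
    using Cauchy_l1_coordinates[where a = "\<lambda>n. snd (F n)" and l = l] Cauchy_snd by blast
  have "(\<lambda>n. p (fst (F n) - \<psi>) + (\<Sum>j<l. \<bar>snd (F n) j - a j\<bar>)) \<longlonglongrightarrow> 0 + (\<Sum>j<l. \<bar>a j - a j\<bar>)"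
    using lim_snd by (intro tendsto_add lim_fst tendsto_sum tendsto_rabs tendsto_diff tendsto_const) auto
  then show "\<exists>z\<in>S \<times> UNIV. (\<lambda>n. p (fst (F n - z)) + (\<Sum>j<l. \<bar>snd (F n - z) j\<bar>)) \<longlonglongrightarrow> 0"
    using \<psi> by (intro bexI[of _ "(\<psi>, a)"]) auto
qed

definition defect_at :: "('a, 'b) monoid_scheme \<Rightarrow> ('a \<Rightarrow> real) \<Rightarrow> 'a \<Rightarrow> 'a \<Rightarrow> real" where
  "defect_at G f x y = f (x \<otimes>\<^bsub>G\<^esub> y) - f x - f y"

lemma defect_at_simps [simp]:
  "defect_at G 0 x y = 0"
  "defect_at G (f + g) x y = defect_at G f x y + defect_at G g x y"
  "defect_at G (f - g) x y = defect_at G f x y - defect_at G g x y"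
  "defect_at G (c *\<^sub>R f) x y = c * defect_at G f x y"
  by (simp_all add: defect_at_def algebra_simps)

lemma quasimorphism_iff_defect_at:
  "quasimorphism G H f \<longleftrightarrow> (\<exists>C. \<forall>x\<in>H. \<forall>y\<in>H. \<bar>defect_at G f x y\<bar> \<le> C)"
  by (simp add: quasimorphism_def defect_at_def)

lemma defect_at_le_defect:
  assumes "quasimorphism G H f" "x \<in> H" "y \<in> H"
  shows "\<bar>defect_at G f x y\<bar> \<le> defect G H f"
proof -
  obtain C where "\<forall>x\<in>H. \<forall>y\<in>H. \<bar>defect_at G f x y\<bar> \<le> C"
    using assms(1) by (auto simp: quasimorphism_iff_defect_at)
  then have "bdd_above ((\<lambda>p. \<bar>defect_at G f (fst p) (snd p)\<bar>) ` (H \<times> H))"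
    by (intro bdd_aboveI2[where M = C]) auto
  then have "\<bar>defect_at G f (fst (x, y)) (snd (x, y))\<bar> \<le> (SUP p\<in>H \<times> H. \<bar>defect_at G f (fst p) (snd p)\<bar>)"
    using assms(2,3) by (intro cSUP_upper) auto
  then show ?thesis
    by (simp add: defect_def defect_at_def)
qed

lemma defect_le:
  assumes "H \<noteq> {}" "\<And>x y. x \<in> H \<Longrightarrow> y \<in> H \<Longrightarrow> \<bar>defect_at G f x y\<bar> \<le> C"
  shows "defect G H f \<le> C"
  using assms unfolding defect_def defect_at_def by (intro cSUP_least) auto

lemma defect_nonneg:
  assumes "quasimorphism G H f" "H \<noteq> {}"
  shows "0 \<le> defect G H f"
  using assms defect_at_le_defect[OF assms(1)] by force

lemma defect_mono:
  assumes "N \<subseteq> L" "N \<noteq> {}" "quasimorphism G L f"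
  shows "defect G N f \<le> defect G L f"
  using assms defect_at_le_defect[OF assms(3)] by (intro defect_le) auto

lemma QG_mono: "N \<subseteq> L \<Longrightarrow> QG G L \<subseteq> QG G N"
  unfolding QG_def homogeneous_def quasimorphism_def G_invariant_def by blast

lemma quasimorphism_add:
  assumes "quasimorphism G H f" "quasimorphism G H g"
  shows "quasimorphism G H (f + g)"
proof -
  obtain C D where "\<forall>x\<in>H. \<forall>y\<in>H. \<bar>defect_at G f x y\<bar> \<le> C" "\<forall>x\<in>H. \<forall>y\<in>H. \<bar>defect_at G g x y\<bar> \<le> D"
    using assms by (auto simp: quasimorphism_iff_defect_at)
  then have "\<forall>x\<in>H. \<forall>y\<in>H. \<bar>defect_at G (f + g) x y\<bar> \<le> C + D"
    by (smt (verit) defect_at_simps(2))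
  then show ?thesis by (auto simp: quasimorphism_iff_defect_at)
qed

lemma quasimorphism_scaleR:
  assumes "quasimorphism G H f"
  shows "quasimorphism G H (c *\<^sub>R f)"
proof -
  obtain C where "\<forall>x\<in>H. \<forall>y\<in>H. \<bar>defect_at G f x y\<bar> \<le> C"
    using assms by (auto simp: quasimorphism_iff_defect_at)
  then have "\<forall>x\<in>H. \<forall>y\<in>H. \<bar>defect_at G (c *\<^sub>R f) x y\<bar> \<le> \<bar>c\<bar> * C"
    by (simp add: abs_mult mult_left_mono)
  then show ?thesis by (auto simp: quasimorphism_iff_defect_at)
qed

lemma QG_subspace: "subspace (QG G H)"
proof (rule subspaceI)
  show "0 \<in> QG G H"
    by (auto simp: QG_def homogeneous_def quasimorphism_iff_defect_at G_invariant_def)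
  show "f + g \<in> QG G H" if "f \<in> QG G H" "g \<in> QG G H" for f g
    using that quasimorphism_add
    by (auto simp: QG_def homogeneous_def G_invariant_def distrib_left)
  show "c *\<^sub>R f \<in> QG G H" if "f \<in> QG G H" for c f
    using that quasimorphism_scaleR by (auto simp: QG_def homogeneous_def G_invariant_def)
qed

lemma QG_quasimorphism: "f \<in> QG G H \<Longrightarrow> quasimorphism G H f"
  by (simp add: QG_def)

lemma defect_add_le:
  assumes "quasimorphism G H f" "quasimorphism G H g" "H \<noteq> {}"
  shows "defect G H (f + g) \<le> defect G H f + defect G H g"
  using defect_at_le_defect[OF assms(1)] defect_at_le_defect[OF assms(2)]
  by (intro defect_le[OF assms(3)]) (smt (verit) defect_at_simps(2))

lemma defect_scaleR_le:
  assumes "quasimorphism G H f" "H \<noteq> {}"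
  shows "defect G H (c *\<^sub>R f) \<le> \<bar>c\<bar> * defect G H f"
  using defect_at_le_defect[OF assms(1)]
  by (intro defect_le[OF assms(2)]) (simp add: abs_mult mult_left_mono)

lemma defect_scaleR:
  assumes f: "quasimorphism G H f" and H: "H \<noteq> {}"
  shows "defect G H (c *\<^sub>R f) = \<bar>c\<bar> * defect G H f"
proof (cases "c = 0")
  case True
  then show ?thesis
    using defect_scaleR_le[OF f H, of 0] defect_nonneg[OF quasimorphism_scaleR[OF f] H, of 0] by simp
next
  case False
  have "defect G H f = defect G H ((1 / c) *\<^sub>R (c *\<^sub>R f))"
    using False by simp
  also have "\<dots> \<le> \<bar>1 / c\<bar> * defect G H (c *\<^sub>R f)"
    by (rule defect_scaleR_le[OF quasimorphism_scaleR[OF f] H])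
  finally have "\<bar>c\<bar> * defect G H f \<le> defect G H (c *\<^sub>R f)"
    using False by (simp add: field_simps)
  then show ?thesis
    using defect_scaleR_le[OF f H, of c] by linarith
qed

lemma seminorm_on_QG: "H \<noteq> {} \<Longrightarrow> seminorm_on (QG G H) (defect G H)"
  unfolding seminorm_on_def
  using QG_subspace defect_nonneg defect_add_le defect_scaleR QG_quasimorphism by blast

lemma defect_additive:
  assumes "H \<noteq> {}" and additive: "\<forall>x\<in>H. \<forall>y\<in>H. f (x \<otimes>\<^bsub>G\<^esub> y) = f x + f y"
  shows "defect G H f = 0"
proof -
  have "quasimorphism G H f"
    using additive by (auto simp: quasimorphism_def)
  moreover have "defect G H f \<le> 0"
    using assms by (intro defect_le) (auto simp: defect_at_def)
  ultimately show ?thesis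
    using defect_nonneg[OF _ assms(1)] by force
qed

lemma additive_if_defect_eq_0:
  assumes "quasimorphism G H f" "defect G H f = 0" "x \<in> H" "y \<in> H"
  shows "f (x \<otimes>\<^bsub>G\<^esub> y) = f x + f y"
  using defect_at_le_defect[OF assms(1,3,4)] assms(2) by (simp add: defect_at_def)

lemma linear_limit_extension:
  fixes \<Phi> :: "nat \<Rightarrow> 'v::real_vector \<Rightarrow> real"
  assumes lin: "\<And>n. linear (\<Phi> n)" and conv: "\<And>r. r \<in> R \<Longrightarrow> convergent (\<lambda>n. \<Phi> n r)"
  shows "\<exists>\<Lambda>. linear \<Lambda> \<and> (\<forall>r\<in>span R. (\<lambda>n. \<Phi> n r) \<longlonglongrightarrow> \<Lambda> r)"
proof -
  obtain B where B: "B \<subseteq> R" "independent B" "R \<subseteq> span B"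
    using maximal_independent_subset[of R] by blast
  obtain \<Lambda> where \<Lambda>: "linear \<Lambda>" and \<Lambda>_B: "\<forall>b\<in>B. \<Lambda> b = lim (\<lambda>n. \<Phi> n b)"
    using linear_independent_extend[OF B(2), of "\<lambda>b. lim (\<lambda>n. \<Phi> n b)"] by blast
  have "(\<lambda>n. \<Phi> n r) \<longlonglongrightarrow> \<Lambda> r" if "r \<in> span B" for r
    using that
  proof (induction rule: span_induct)
    case (step b)
    then show ?case
      using B(1) conv \<Lambda>_B by (auto simp: convergent_LIMSEQ_iff)
  next
    case base
    show ?case
    proof (rule subspaceI)
      show "0 \<in> {r. (\<lambda>n. \<Phi> n r) \<longlonglongrightarrow> \<Lambda> r}"
        by (simp add: linear_0[OF lin] linear_0[OF \<Lambda>])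
      show "u + v \<in> {r. (\<lambda>n. \<Phi> n r) \<longlonglongrightarrow> \<Lambda> r}"
        if "u \<in> {r. (\<lambda>n. \<Phi> n r) \<longlonglongrightarrow> \<Lambda> r}" "v \<in> {r. (\<lambda>n. \<Phi> n r) \<longlonglongrightarrow> \<Lambda> r}" for u v
        using that tendsto_add by (simp add: linear_add[OF lin] linear_add[OF \<Lambda>]) blast
      show "c *\<^sub>R u \<in> {r. (\<lambda>n. \<Phi> n r) \<longlonglongrightarrow> \<Lambda> r}"
        if "u \<in> {r. (\<lambda>n. \<Phi> n r) \<longlonglongrightarrow> \<Lambda> r}" for c u
        using that by (simp add: linear_scale[OF lin] linear_scale[OF \<Lambda>] tendsto_mult_left)
    qed
  qed
  moreover have "span R = span B"
    using B by (simp add: span_eq span_superset subset_trans[OF B(1)])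
  ultimately show ?thesis using \<Lambda> by auto
qed

lemma linear_evaluation: "linear (\<lambda>u::'a \<Rightarrow> real. u a)"
  by (rule linearI) simp_all

lemma linear_on_span_evaluations:
  fixes \<Lambda> :: "(('a \<Rightarrow> real) \<Rightarrow> real) \<Rightarrow> real"
  assumes \<Lambda>: "linear \<Lambda>" and r: "r \<in> span (range (\<lambda>a u. u a))"
  shows "\<Lambda> r = r (\<lambda>a. \<Lambda> (\<lambda>u. u a))"
  using r
proof (induction rule: span_induct)
  case (step r)
  then show ?case by auto
next
  case base
  show ?case
    by (rule subspaceI) (simp_all add: linear_0[OF \<Lambda>] linear_add[OF \<Lambda>] linear_scale[OF \<Lambda>])
qed

definition qm_relations :: "('a, 'b) monoid_scheme \<Rightarrow> 'a set \<Rightarrow> (('a \<Rightarrow> real) \<Rightarrow> real) set" where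
  "qm_relations G H =
    {(\<lambda>u. defect_at G u x y) | x y. x \<in> H \<and> y \<in> H} \<union>
    {(\<lambda>u. u (g \<otimes>\<^bsub>G\<^esub> h \<otimes>\<^bsub>G\<^esub> inv\<^bsub>G\<^esub> g) - u h) | g h. g \<in> carrier G \<and> h \<in> H} \<union>
    {(\<lambda>u. u (h [^]\<^bsub>G\<^esub> k) - of_int k * u h) | h (k::int). h \<in> H}"

lemma qm_relations_subset_span: "qm_relations G H \<subseteq> span (range (\<lambda>a u. u a))"
proof -
  have ev: "(\<lambda>u. u a) \<in> span (range (\<lambda>a u. u a))" for a :: 'a
    by (intro span_base rangeI)
  have diff: "(\<lambda>u. f u - g u) \<in> span (range (\<lambda>a u. u a))"
    if "f \<in> span (range (\<lambda>a u. u a))" "g \<in> span (range (\<lambda>a u. u a))" for f g :: "('a \<Rightarrow> real) \<Rightarrow> real"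
    using span_diff[OF that] by (simp add: fun_diff_def)
  have scale: "(\<lambda>u. t * f u) \<in> span (range (\<lambda>a u. u a))"
    if "f \<in> span (range (\<lambda>a u. u a))" for f :: "('a \<Rightarrow> real) \<Rightarrow> real" and t :: real
    using span_scale[OF that, of t] by (simp add: scaleR_fun_def)
  show ?thesis
    unfolding qm_relations_def defect_at_def by (auto intro!: diff scale ev)
qed

lemma convergent_qm_relations:
  assumes f: "\<And>n. f n \<in> QG G H"
    and conv: "\<And>x y. x \<in> H \<Longrightarrow> y \<in> H \<Longrightarrow> convergent (\<lambda>n. defect_at G (f n) x y)"
    and r: "r \<in> qm_relations G H"
  shows "convergent (\<lambda>n. r (f n))"
  using r unfolding qm_relations_def
proof (elim UnE CollectE exE conjE)
  fix x y assume "r = (\<lambda>u. defect_at G u x y)" "x \<in> H" "y \<in> H"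
  then show ?thesis using conv by simp
next
  fix g h assume "r = (\<lambda>u. u (g \<otimes>\<^bsub>G\<^esub> h \<otimes>\<^bsub>G\<^esub> inv\<^bsub>G\<^esub> g) - u h)" "g \<in> carrier G" "h \<in> H"
  then show ?thesis
    using f by (simp add: QG_def G_invariant_def convergent_const)
next
  fix h and k :: int assume "r = (\<lambda>u. u (h [^]\<^bsub>G\<^esub> k) - of_int k * u h)" "h \<in> H"
  then show ?thesis
    using f by (simp add: QG_def homogeneous_def convergent_const)
qed

lemma qm_relations_limit:
  assumes f: "\<And>n. f n \<in> QG G H"
    and conv: "\<And>x y. x \<in> H \<Longrightarrow> y \<in> H \<Longrightarrow> convergent (\<lambda>n. defect_at G (f n) x y)"
  shows "\<exists>\<phi>. \<forall>r\<in>qm_relations G H. (\<lambda>n. r (f n)) \<longlonglongrightarrow> r \<phi>"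
proof -
  obtain \<Lambda> where \<Lambda>: "linear \<Lambda>"
    and lim: "\<forall>r\<in>span (qm_relations G H). (\<lambda>n. r (f n)) \<longlonglongrightarrow> \<Lambda> r"
    using linear_limit_extension[of "\<lambda>n r. r (f n)", OF linear_evaluation]
      convergent_qm_relations[OF f conv] by blast
  show ?thesis
  proof (intro exI ballI)
    fix r assume r: "r \<in> qm_relations G H"
    then have "(\<lambda>n. r (f n)) \<longlonglongrightarrow> \<Lambda> r"
      using lim span_base by blast
    moreover have "\<Lambda> r = r (\<lambda>a. \<Lambda> (\<lambda>u. u a))"
      using linear_on_span_evaluations[OF \<Lambda>] qm_relations_subset_span r by blast
    ultimately show "(\<lambda>n. r (f n)) \<longlonglongrightarrow> r (\<lambda>a. \<Lambda> (\<lambda>u. u a))"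
      by simp
  qed
qed

lemma QG_limit_of_defect_terms:
  assumes f: "\<And>n. f n \<in> QG G H"
    and conv: "\<And>x y. x \<in> H \<Longrightarrow> y \<in> H \<Longrightarrow> convergent (\<lambda>n. defect_at G (f n) x y)"
  shows "\<exists>\<phi>. homogeneous G H \<phi> \<and> G_invariant G H \<phi> \<and>
    (\<forall>x\<in>H. \<forall>y\<in>H. (\<lambda>n. defect_at G (f n) x y) \<longlonglongrightarrow> defect_at G \<phi> x y)"
proof -
  obtain \<phi> where lim: "\<And>r. r \<in> qm_relations G H \<Longrightarrow> (\<lambda>n. r (f n)) \<longlonglongrightarrow> r \<phi>"
    using qm_relations_limit[OF f conv] by blast
  have "(\<lambda>n. defect_at G (f n) x y) \<longlonglongrightarrow> defect_at G \<phi> x y" if "x \<in> H" "y \<in> H" for x y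
  proof -
    have "(\<lambda>u. defect_at G u x y) \<in> qm_relations G H"
      unfolding qm_relations_def using that by blast
    then show ?thesis using lim by blast
  qed
  moreover have "G_invariant G H \<phi>"
    unfolding G_invariant_def
  proof (intro ballI)
    fix g h assume gh: "g \<in> carrier G" "h \<in> H"
    then have "(\<lambda>u. u (g \<otimes>\<^bsub>G\<^esub> h \<otimes>\<^bsub>G\<^esub> inv\<^bsub>G\<^esub> g) - u h) \<in> qm_relations G H"
      unfolding qm_relations_def by blast
    from lim[OF this] have "(\<lambda>n. 0) \<longlonglongrightarrow> \<phi> (g \<otimes>\<^bsub>G\<^esub> h \<otimes>\<^bsub>G\<^esub> inv\<^bsub>G\<^esub> g) - \<phi> h"
      using f gh by (simp add: QG_def G_invariant_def)
    then show "\<phi> (g \<otimes>\<^bsub>G\<^esub> h \<otimes>\<^bsub>G\<^esub> inv\<^bsub>G\<^esub> g) = \<phi> h"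
      by (simp add: LIMSEQ_const_iff)
  qed
  moreover have "homogeneous G H \<phi>"
    unfolding homogeneous_def
  proof (intro ballI allI)
    fix h and k :: int assume h: "h \<in> H"
    then have "(\<lambda>u. u (h [^]\<^bsub>G\<^esub> k) - of_int k * u h) \<in> qm_relations G H"
      unfolding qm_relations_def by blast
    from lim[OF this] have "(\<lambda>n. 0) \<longlonglongrightarrow> \<phi> (h [^]\<^bsub>G\<^esub> k) - of_int k * \<phi> h"
      using f h by (simp add: QG_def homogeneous_def)
    then show "\<phi> (h [^]\<^bsub>G\<^esub> k) = of_int k * \<phi> h"
      by (simp add: LIMSEQ_const_iff)
  qed
  ultimately show ?thesis by blast
qed

lemma defect_at_diff_le_defect:
  assumes "f \<in> QG G H" "g \<in> QG G H" "x \<in> H" "y \<in> H"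
  shows "\<bar>defect_at G f x y - defect_at G g x y\<bar> \<le> defect G H (f - g)"
  using defect_at_le_defect[OF QG_quasimorphism[OF subspace_diff[OF QG_subspace assms(1,2)]] assms(3,4)]
  by simp

lemma defect_at_uniform_limit:
  assumes f: "\<forall>n. f n \<in> QG G H"
    and Cauchy: "\<forall>e>0. \<exists>N. \<forall>m\<ge>N. \<forall>n\<ge>N. defect G H (f m - f n) < e"
    and lim: "\<And>x y. x \<in> H \<Longrightarrow> y \<in> H \<Longrightarrow> (\<lambda>n. defect_at G (f n) x y) \<longlonglongrightarrow> defect_at G \<phi> x y"
    and "e > 0"
  shows "\<exists>N. \<forall>n\<ge>N. \<forall>x\<in>H. \<forall>y\<in>H. \<bar>defect_at G (f n) x y - defect_at G \<phi> x y\<bar> \<le> e"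
proof -
  obtain N where N: "\<forall>m\<ge>N. \<forall>n\<ge>N. defect G H (f m - f n) < e"
    using Cauchy \<open>e > 0\<close> by blast
  have "\<bar>defect_at G (f n) x y - defect_at G \<phi> x y\<bar> \<le> e" if "n \<ge> N" "x \<in> H" "y \<in> H" for n x y
  proof (rule Lim_bounded)
    show "(\<lambda>m. \<bar>defect_at G (f n) x y - defect_at G (f m) x y\<bar>)
        \<longlonglongrightarrow> \<bar>defect_at G (f n) x y - defect_at G \<phi> x y\<bar>"
      by (intro tendsto_rabs tendsto_diff tendsto_const lim that(2,3))
    show "\<forall>m\<ge>N. \<bar>defect_at G (f n) x y - defect_at G (f m) x y\<bar> \<le> e"
      using N defect_at_diff_le_defect[OF f[rule_format] f[rule_format] that(2,3), of n] that(1)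
      by (meson less_imp_le order_trans)
  qed
  then show ?thesis by blast
qed

lemma seminorm_complete_QG:
  assumes H: "H \<noteq> {}"
  shows "seminorm_complete (QG G H) (defect G H)"
  unfolding seminorm_complete_def
proof (intro allI impI)
  fix f :: "nat \<Rightarrow> 'a \<Rightarrow> real" assume f: "\<forall>n. f n \<in> QG G H"
    and Cauchy: "\<forall>e>0. \<exists>N. \<forall>m\<ge>N. \<forall>n\<ge>N. defect G H (f m - f n) < e"
  have "convergent (\<lambda>n. defect_at G (f n) x y)" if "x \<in> H" "y \<in> H" for x y
    unfolding Cauchy_convergent_iff[symmetric]
  proof (rule CauchyI)
    fix e :: real assume "e > 0"
    then obtain N where "\<forall>m\<ge>N. \<forall>n\<ge>N. defect G H (f m - f n) < e" using Cauchy by blast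
    then show "\<exists>N. \<forall>m\<ge>N. \<forall>n\<ge>N. norm (defect_at G (f m) x y - defect_at G (f n) x y) < e"
      using defect_at_diff_le_defect[OF f[rule_format] f[rule_format] that]
      by (metis le_less_trans real_norm_def)
  qed
  then obtain \<phi> where \<phi>: "homogeneous G H \<phi>" "G_invariant G H \<phi>"
    and lim: "\<And>x y. x \<in> H \<Longrightarrow> y \<in> H \<Longrightarrow> (\<lambda>n. defect_at G (f n) x y) \<longlonglongrightarrow> defect_at G \<phi> x y"
    using QG_limit_of_defect_terms[of f] f by blast
  note uniform = defect_at_uniform_limit[OF f Cauchy lim]
  obtain N1 where N1: "\<forall>x\<in>H. \<forall>y\<in>H. \<bar>defect_at G (f N1) x y - defect_at G \<phi> x y\<bar> \<le> 1"
    using uniform[of 1] by auto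
  have "\<bar>defect_at G \<phi> x y\<bar> \<le> defect G H (f N1) + 1" if "x \<in> H" "y \<in> H" for x y
    using N1 defect_at_le_defect[OF QG_quasimorphism[OF f[rule_format]] that, of N1] that by force
  then have \<phi>_QG: "\<phi> \<in> QG G H"
    using \<phi> by (auto simp: QG_def quasimorphism_iff_defect_at)
  have "(\<lambda>n. defect G H (f n - \<phi>)) \<longlonglongrightarrow> 0"
  proof (rule LIMSEQ_I)
    fix r :: real assume "r > 0"
    then obtain N where N: "\<forall>n\<ge>N. \<forall>x\<in>H. \<forall>y\<in>H. \<bar>defect_at G (f n) x y - defect_at G \<phi> x y\<bar> \<le> r / 2"
      using uniform[of "r / 2"] by auto
    have "defect G H (f n - \<phi>) \<le> r / 2" if "n \<ge> N" for n
      using N that by (intro defect_le[OF H]) simp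
    moreover have "0 \<le> defect G H (f n - \<phi>)" for n
      using seminorm_on_nonneg[OF seminorm_on_QG[OF H]] subspace_diff[OF QG_subspace] f \<phi>_QG by blast
    ultimately show "\<exists>N. \<forall>n\<ge>N. norm (defect G H (f n - \<phi>) - 0) < r"
      using \<open>r > 0\<close> by force
  qed
  then show "\<exists>\<phi>\<in>QG G H. (\<lambda>n. defect G H (f n - \<phi>)) \<longlonglongrightarrow> 0"
    using \<phi>_QG by blast
qed

lemma W_basis_onto_modulo_H1G:
  assumes N: "subgroup N G" and W: "W_basis G L N l \<nu>s" and \<nu>: "\<nu> \<in> QG G N"
  shows "\<exists>\<psi>\<in>QG G L. \<exists>a. defect G N (\<nu> - (\<psi> + (\<Sum>j<l. a j *\<^sub>R \<nu>s j))) = 0"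
proof -
  obtain a where "in_W_kernel G L N (\<lambda>x. \<nu> x - (\<Sum>j<l. a j * \<nu>s j x))"
    using W \<nu> unfolding W_basis_def by blast
  then obtain k \<psi> where k: "k \<in> H1G G N" and \<psi>: "\<psi> \<in> QG G L"
    and eq: "\<forall>x\<in>N. \<nu> x - (\<Sum>j<l. a j * \<nu>s j x) = k x + \<psi> x"
    unfolding in_W_kernel_def by blast
  have "(\<nu> - (\<psi> + (\<Sum>j<l. a j *\<^sub>R \<nu>s j))) x = k x" if "x \<in> N" for x
  proof -
    have "\<nu> x - (\<Sum>j<l. a j * \<nu>s j x) = k x + \<psi> x"
      using eq that by blast
    then show ?thesis by (simp add: sum_fun_apply)
  qed
  then have "\<forall>x\<in>N. \<forall>y\<in>N. (\<nu> - (\<psi> + (\<Sum>j<l. a j *\<^sub>R \<nu>s j))) (x \<otimes>\<^bsub>G\<^esub> y)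
      = (\<nu> - (\<psi> + (\<Sum>j<l. a j *\<^sub>R \<nu>s j))) x + (\<nu> - (\<psi> + (\<Sum>j<l. a j *\<^sub>R \<nu>s j))) y"
    using k subgroup.m_closed[OF N] by (simp add: H1G_def)
  then have "defect G N (\<nu> - (\<psi> + (\<Sum>j<l. a j *\<^sub>R \<nu>s j))) = 0"
    using subgroup.one_closed[OF N] by (intro defect_additive) auto
  then show ?thesis
    using \<psi> by blast
qed

lemma defect_restriction_plus_combination_le:
  fixes l :: nat
  assumes NL: "N \<subseteq> L" and N: "N \<noteq> {}" and \<psi>: "\<psi> \<in> QG G L" and \<nu>s: "\<forall>j<l. \<nu>s j \<in> QG G N"
  shows "defect G N (\<psi> + (\<Sum>j<l. a j *\<^sub>R \<nu>s j))
    \<le> (1 + (\<Sum>j<l. defect G N (\<nu>s j))) * (defect G L \<psi> + (\<Sum>j<l. \<bar>a j\<bar>))"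
proof -
  define K where "K = (\<Sum>j<l. defect G N (\<nu>s j))"
  have QN: "seminorm_on (QG G N) (defect G N)"
    using N by (rule seminorm_on_QG)
  have scaled: "a j *\<^sub>R \<nu>s j \<in> QG G N" if "j < l" for j
    using \<nu>s that by (simp add: subspace_scale[OF QG_subspace])
  have "defect G N (\<psi> + (\<Sum>j<l. a j *\<^sub>R \<nu>s j)) \<le> defect G N \<psi> + defect G N (\<Sum>j<l. a j *\<^sub>R \<nu>s j)"
    using \<psi> QG_mono[OF NL] scaled
    by (intro seminorm_on_triangle[OF QN] subspace_sum[OF QG_subspace]) auto
  moreover have "defect G N \<psi> \<le> defect G L \<psi>"
    using defect_mono[OF NL N QG_quasimorphism[OF \<psi>]] .
  moreover have "defect G N (\<Sum>j<l. a j *\<^sub>R \<nu>s j) \<le> (\<Sum>j<l. defect G N (a j *\<^sub>R \<nu>s j))"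
    using scaled by (intro seminorm_on_sum[OF QN]) auto
  moreover have "(\<Sum>j<l. defect G N (a j *\<^sub>R \<nu>s j)) = (\<Sum>j<l. \<bar>a j\<bar> * defect G N (\<nu>s j))"
    using seminorm_on_scaleR[OF QN] \<nu>s by (intro sum.cong) auto
  moreover have "(\<Sum>j<l. \<bar>a j\<bar> * defect G N (\<nu>s j)) \<le> (\<Sum>j<l. \<bar>a j\<bar> * K)"
  proof (intro sum_mono mult_left_mono)
    show "defect G N (\<nu>s j) \<le> K" if "j \<in> {..<l}" for j
      unfolding K_def using that \<nu>s seminorm_on_nonneg[OF QN] by (intro member_le_sum) auto
  qed simp
  moreover have "(\<Sum>j<l. \<bar>a j\<bar> * K) = (\<Sum>j<l. \<bar>a j\<bar>) * K"
    by (simp add: sum_distrib_right)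
  moreover have "0 \<le> K * defect G L \<psi>"
  proof (rule mult_nonneg_nonneg)
    show "0 \<le> K"
      unfolding K_def using \<nu>s seminorm_on_nonneg[OF QN] by (auto intro: sum_nonneg)
    show "0 \<le> defect G L \<psi>"
      using defect_nonneg[OF QG_quasimorphism[OF \<psi>]] N NL by blast
  qed
  moreover have "0 \<le> (\<Sum>j<l. \<bar>a j\<bar>)"
    by (simp add: sum_nonneg)
  moreover have "(1 + K) * (defect G L \<psi> + (\<Sum>j<l. \<bar>a j\<bar>))
      = defect G L \<psi> + (\<Sum>j<l. \<bar>a j\<bar>) * K + (K * defect G L \<psi> + (\<Sum>j<l. \<bar>a j\<bar>))"
    by (simp add: algebra_simps)
  ultimately show ?thesis
    unfolding K_def[symmetric] by linarith
qed

lemma W_basis_open_mapping: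
  assumes N: "subgroup N G" and NL: "N \<subseteq> L" and W: "W_basis G L N l \<nu>s"
  shows "\<exists>M>0. \<forall>\<nu>\<in>QG G N. \<exists>\<psi>\<in>QG G L. \<exists>a. defect G L \<psi> + (\<Sum>j<l. \<bar>a j\<bar>) \<le> M * defect G N \<nu> \<and>
    defect G N (\<nu> - (\<psi> + (\<Sum>j<l. a j *\<^sub>R \<nu>s j))) = 0"
proof -
  have N_ne: "N \<noteq> {}" using subgroup.one_closed[OF N] by blast
  then have L_ne: "L \<noteq> {}" using NL by blast
  have \<nu>s: "\<forall>j<l. \<nu>s j \<in> QG G N" using W by (simp add: W_basis_def)
  define T where "T z = fst z + (\<Sum>j<l. snd z j *\<^sub>R \<nu>s j)" for z :: "('a \<Rightarrow> real) \<times> (nat \<Rightarrow> real)"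
  have linear: "linear T"
    by (rule linearI)
      (simp_all add: T_def sum.distrib scaleR_add_left scaleR_add_right scaleR_sum_right)
  have image: "T ` (QG G L \<times> UNIV) \<subseteq> QG G N"
    using subsetD[OF QG_mono[OF NL]] \<nu>s
    by (auto simp: T_def intro!: subspace_add[OF QG_subspace] subspace_sum[OF QG_subspace]
        subspace_scale[OF QG_subspace])
  have bounded: "\<forall>z\<in>QG G L \<times> UNIV. defect G N (T z)
      \<le> (1 + (\<Sum>j<l. defect G N (\<nu>s j))) * (defect G L (fst z) + (\<Sum>j<l. \<bar>snd z j\<bar>))"
    using defect_restriction_plus_combination_le[OF NL N_ne _ \<nu>s] by (auto simp: T_def)
  have onto: "\<forall>\<nu>\<in>QG G N. \<exists>z\<in>QG G L \<times> UNIV. defect G N (\<nu> - T z) = 0"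
  proof
    fix \<nu> assume "\<nu> \<in> QG G N"
    then obtain \<psi> a where "\<psi> \<in> QG G L" "defect G N (\<nu> - (\<psi> + (\<Sum>j<l. a j *\<^sub>R \<nu>s j))) = 0"
      using W_basis_onto_modulo_H1G[OF N W] by blast
    then show "\<exists>z\<in>QG G L \<times> UNIV. defect G N (\<nu> - T z) = 0"
      by (intro bexI[of _ "(\<psi>, a)"]) (auto simp: T_def)
  qed
  obtain M where M: "M > 0" and decompose: "\<forall>\<nu>\<in>QG G N. \<exists>z\<in>QG G L \<times> UNIV.
      defect G L (fst z) + (\<Sum>j<l. \<bar>snd z j\<bar>) \<le> M * defect G N \<nu> \<and> defect G N (\<nu> - T z) = 0"
    using open_mapping_seminorm[OF seminorm_on_times_l1[OF seminorm_on_QG[OF L_ne]]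
        seminorm_complete_times_l1[OF seminorm_on_QG[OF L_ne] seminorm_complete_QG[OF L_ne]]
        seminorm_on_QG[OF N_ne] seminorm_complete_QG[OF N_ne] linear image bounded onto]
    by blast
  show ?thesis
  proof (intro exI[of _ M] conjI ballI)
    fix \<nu> assume "\<nu> \<in> QG G N"
    then obtain z where "z \<in> QG G L \<times> UNIV" "defect G L (fst z) + (\<Sum>j<l. \<bar>snd z j\<bar>) \<le> M * defect G N \<nu>"
      "defect G N (\<nu> - T z) = 0"
      using decompose by blast
    then show "\<exists>\<psi>\<in>QG G L. \<exists>a. defect G L \<psi> + (\<Sum>j<l. \<bar>a j\<bar>) \<le> M * defect G N \<nu> \<and>
        defect G N (\<nu> - (\<psi> + (\<Sum>j<l. a j *\<^sub>R \<nu>s j))) = 0"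
      by (intro bexI[of _ "fst z"] exI[of _ "snd z"]) (auto simp: T_def mem_Times_iff)
  qed (rule M)
qed

lemma W_basis_decomposition:
  assumes N: "subgroup N G" and NL: "N \<subseteq> L" and W: "W_basis G L N l \<nu>s"
  shows "\<exists>M>0. \<forall>\<nu>\<in>QG G N. \<exists>k \<psi> a. k \<in> H1G G N \<and> \<psi> \<in> QG G L \<and>
      (\<forall>x\<in>N. \<nu> x = k x + \<psi> x + (\<Sum>j<l. a j * \<nu>s j x)) \<and>
      defect G L \<psi> + (\<Sum>j<l. \<bar>a j\<bar>) \<le> M * defect G N \<nu>"
proof -
  obtain M where M: "M > 0" and decompose: "\<forall>\<nu>\<in>QG G N. \<exists>\<psi>\<in>QG G L. \<exists>a.
      defect G L \<psi> + (\<Sum>j<l. \<bar>a j\<bar>) \<le> M * defect G N \<nu> \<and>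
      defect G N (\<nu> - (\<psi> + (\<Sum>j<l. a j *\<^sub>R \<nu>s j))) = 0"
    using W_basis_open_mapping[OF assms] by blast
  have "\<exists>k \<psi> a. k \<in> H1G G N \<and> \<psi> \<in> QG G L \<and> (\<forall>x\<in>N. \<nu> x = k x + \<psi> x + (\<Sum>j<l. a j * \<nu>s j x)) \<and>
      defect G L \<psi> + (\<Sum>j<l. \<bar>a j\<bar>) \<le> M * defect G N \<nu>" if \<nu>: "\<nu> \<in> QG G N" for \<nu>
  proof -
    obtain \<psi> a where \<psi>: "\<psi> \<in> QG G L" and bound: "defect G L \<psi> + (\<Sum>j<l. \<bar>a j\<bar>) \<le> M * defect G N \<nu>"
      and null: "defect G N (\<nu> - (\<psi> + (\<Sum>j<l. a j *\<^sub>R \<nu>s j))) = 0"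
      using decompose \<nu> by blast
    define k where "k = \<nu> - (\<psi> + (\<Sum>j<l. a j *\<^sub>R \<nu>s j))"
    have k: "k \<in> QG G N"
      unfolding k_def using \<nu> \<psi> subsetD[OF QG_mono[OF NL]] W
      by (auto simp: W_basis_def intro!: subspace_diff[OF QG_subspace] subspace_add[OF QG_subspace]
          subspace_sum[OF QG_subspace] subspace_scale[OF QG_subspace])
    then have "k \<in> H1G G N"
      using additive_if_defect_eq_0[OF QG_quasimorphism[OF k] null[folded k_def]]
      by (auto simp: H1G_def QG_def)
    moreover have "\<forall>x\<in>N. \<nu> x = k x + \<psi> x + (\<Sum>j<l. a j * \<nu>s j x)"
      by (simp add: k_def sum_fun_apply)
    ultimately show ?thesis using \<psi> bound by blast
  qed
  then show ?thesis using M by blast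
qed

theorem theorem5p2:
  fixes G :: "('a, 'b) monoid_scheme" and L N :: "'a set"
    and l :: nat and \<nu>s :: "nat \<Rightarrow> 'a \<Rightarrow> real"
  assumes "group G" and "L \<lhd> G" and "N \<lhd> G" and "N \<subseteq> L"
    and "W_basis G L N l \<nu>s"
  shows "\<exists>C1 C2 :: real. C1 > 0 \<and> C2 > 0 \<and>
    (\<forall>\<nu>\<in>QG G N. \<exists>k \<psi> (a :: nat \<Rightarrow> real).
        k \<in> H1G G N \<and> \<psi> \<in> QG G L \<and>
        (\<forall>x\<in>N. \<nu> x = k x + \<psi> x + (\<Sum>j<l. a j * \<nu>s j x)) \<and>
        defect G N \<nu> \<ge> (1 / C1) * (defect G L \<psi> + (1 / C2) * (\<Sum>j<l. \<bar>a j\<bar>)))"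
proof -
  obtain M where M: "M > 0" and decompose: "\<forall>\<nu>\<in>QG G N. \<exists>k \<psi> a. k \<in> H1G G N \<and> \<psi> \<in> QG G L \<and>
      (\<forall>x\<in>N. \<nu> x = k x + \<psi> x + (\<Sum>j<l. a j * \<nu>s j x)) \<and>
      defect G L \<psi> + (\<Sum>j<l. \<bar>a j\<bar>) \<le> M * defect G N \<nu>"
    using W_basis_decomposition[OF normal_imp_subgroup[OF assms(3)] assms(4,5)] by blast
  have rescale: "(1 / M) * (s + (1 / 1) * t) \<le> d" if "s + t \<le> M * d" for s t d :: real
    using that M by (simp add: field_simps)
  show ?thesis
  proof (rule exI[of _ M], rule exI[of _ 1], intro conjI ballI)
    fix \<nu> assume "\<nu> \<in> QG G N"
    then obtain k \<psi> a where "k \<in> H1G G N" "\<psi> \<in> QG G L" "\<forall>x\<in>N. \<nu> x = k x + \<psi> x + (\<Sum>j<l. a j * \<nu>s j x)"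
      "defect G L \<psi> + (\<Sum>j<l. \<bar>a j\<bar>) \<le> M * defect G N \<nu>"
      using decompose by blast
    then show "\<exists>k \<psi> a. k \<in> H1G G N \<and> \<psi> \<in> QG G L \<and> (\<forall>x\<in>N. \<nu> x = k x + \<psi> x + (\<Sum>j<l. a j * \<nu>s j x)) \<and>
        defect G N \<nu> \<ge> (1 / M) * (defect G L \<psi> + (1 / 1) * (\<Sum>j<l. \<bar>a j\<bar>))"
      using rescale by blast
  qed (use M in auto)
qed

end
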